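(* (i) For arbitrary parameters $a > 0$ and $b > 1$, with $\delta := (a+1)/(a+b)$, \[ \rho \bigl( \mathrm{Beta}(a,b), \mathrm{Gamma}(a,a+b) \bigr) \le (1-\delta)^{-1/2} \] and \[ d_{\mathrm{TV}} \bigl( \mathrm{Beta}(a,b), \mathrm{Gamma}(a,a+b) \bigr) \le 1 - (1-\delta)^{1/2} < \frac{\delta}{2-\delta} . \] (ii) For $a > 0$, $b > 1$ and arbitrary $c > 0$, \[ \rho \bigl( \mathrm{Beta}(a,b), \mathrm{Gamma}(a,c) \bigr) \ge \rho \bigl( \mathrm{Beta}(a,b), \mathrm{Gamma}(a,a+b-1) \bigr) . \] Moreover, with $\widetilde{\delta} := a/(a+b-1)$ (which satisfies $\widetilde{\delta} < \delta$), \[ \rho \bigl( \mathrm{Beta}(a,b), \mathrm{Gamma}(a,a+b-1) \bigr) \le (1-\widetilde{\delta})^{-1/2} \] and \[ d_{\mathrm{TV}} \bigl( \mathrm{Beta}(a,b), \mathrm{Gamma}(a,a+b-1) \bigr) \le 1 - (1-\widetilde{\delta})^{1/2} < \frac{\widetilde{\delta}}{2-\widetilde{\delta}} . \]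
   Context: $\mathrm{Beta}(a,b)$ is viewed as a distribution on $(0,\infty)$ with Lebesgue density $\beta_{a,b}(x) = \frac{\Gamma(a+b)}{\Gamma(a)\Gamma(b)} x^{a-1}(1-x)_+^{b-1}$, $x>0$. $\mathrm{Gamma}(a,c)$ is the gamma distribution with shape $a>0$ and rate $c>0$, with density $\gamma_{a,c}(x) = \frac{c^a}{\Gamma(a)} x^{a-1} e^{-cx}$, $x>0$. For probability measures $Q,P$ on $(\mathcal{X},\mathcal{A})$: $\rho(Q,P) := \sup_{A \in \mathcal{A}} Q(A)/P(A)$ with conventions $0/0 := 0$, $a/0 := \infty$ for $a>0$; $d_{\mathrm{TV}}(Q,P) := \sup_{A \in \mathcal{A}} |Q(A)-P(A)|$. *)

theory Defs
  imports "HOL-Probability.Probability" "HOL-Analysis.Gamma_Function"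
begin

definition beta_density :: "real \<Rightarrow> real \<Rightarrow> real \<Rightarrow> real" where
  "beta_density a b x =
     (if 0 < x \<and> x < 1
      then Gamma (a + b) / (Gamma a * Gamma b) * x powr (a - 1) * (1 - x) powr (b - 1)
      else 0)"

definition gamma_density :: "real \<Rightarrow> real \<Rightarrow> real \<Rightarrow> real" where
  "gamma_density a c x =
     (if 0 < x then c powr a / Gamma a * x powr (a - 1) * exp (- c * x) else 0)"

definition beta_dist :: "real \<Rightarrow> real \<Rightarrow> real measure" where
  "beta_dist a b = density lborel (\<lambda>x. ennreal (beta_density a b x))"

definition gamma_dist :: "real \<Rightarrow> real \<Rightarrow> real measure" where
  "gamma_dist a c = density lborel (\<lambda>x. ennreal (gamma_density a c x))"

definition ratio_conv :: "ennreal \<Rightarrow> ennreal \<Rightarrow> ennreal" where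
  "ratio_conv q p = (if p = 0 then (if q = 0 then 0 else \<infinity>) else q / p)"

definition rho :: "'a measure \<Rightarrow> 'a measure \<Rightarrow> ennreal" where
  "rho Q P = (SUP A \<in> sets P. ratio_conv (emeasure Q A) (emeasure P A))"

definition d_TV :: "'a measure \<Rightarrow> 'a measure \<Rightarrow> real" where
  "d_TV Q P = (SUP A \<in> sets P. \<bar>measure Q A - measure P A\<bar>)"

end

theory Submission
  imports Defs "HOL-Real_Asymp.Real_Asymp"
begin

text \<open>On \<open>(0, 1)\<close> the density ratio of \<open>Beta(a, b)\<close> to \<open>Gamma(a, c)\<close> is \<open>exp\<close> of
  \<open>beta_gamma_log_ratio a b c\<close>, which is maximal at the mode \<open>1 - (b - 1) / c\<close>. Hence \<open>rho\<close> is at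
  most the exponential of this maximum \<open>M\<close>, and \<open>d_TV \<le> 1 - exp (- M)\<close> by passing to complements.
  For \<open>c = a + b\<close> and \<open>c = a + b - 1\<close> the maximum equals
  \<open>stirling_err c - stirling_err (b - 1) + ln (c / (b - 1)) / 2\<close>, and \<open>stirling_err\<close> is
  decreasing, which gives the bound \<open>(1 - \<delta>) powr (-1/2)\<close> with \<open>1 - \<delta> = (b - 1) / c\<close>.
  The rate \<open>a + b - 1\<close> is optimal: its log ratio is maximal at \<open>x = a / (a + b - 1)\<close>, where
  the log ratio as a function of the rate is minimal at \<open>a + b - 1\<close>, while \<open>rho\<close> dominates the
  density ratio at every point where it is continuous.\<close>

section \<open>Monotonicity of the Stirling error\<close>

text \<open>The trapezoidal rule overestimates the integral of the convex function \<open>1 / t\<close>.\<close>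
lemma ln_add_one_diff_le:
  fixes x :: real
  assumes x: "x > 0"
  shows "ln (x + 1) - ln x \<le> (2 * x + 1) / (2 * x * (x + 1))"
proof -
  define h where "h u = (1 + u - 1 / (1 + u)) / 2 - ln (1 + u)" for u :: real
  have h': "(h has_real_derivative (1 - 1 / (1 + t))\<^sup>2 / 2) (at t)" if "0 < 1 + t" for t
    using that unfolding h_def[abs_def]
    apply (intro derivative_eq_intros)
    apply (rule refl | simp)+
    apply (simp add: divide_simps power2_eq_square)
    apply (simp add: algebra_simps)
    done
  have "h 0 \<le> h (1 / x)"
  proof (rule DERIV_nonneg_imp_nondecreasing[of 0 "1 / x" h])
    fix t :: real
    assume "0 \<le> t"
    then show "\<exists>y. (h has_real_derivative y) (at t) \<and> 0 \<le> y"
      using h'[of t] by auto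
  qed (use x in simp)
  moreover have "ln (1 + 1 / x) = ln (x + 1) - ln x"
    using x by (simp add: ln_divide_pos[symmetric] field_simps)
  moreover have "(1 + 1 / x - 1 / (1 + 1 / x)) / 2 = (2 * x + 1) / (2 * x * (x + 1))"
    using x by (simp add: field_simps)
  ultimately show ?thesis by (simp add: h_def)
qed

lemma Gamma_real_neq_zero [simp]: "x > 0 \<Longrightarrow> Gamma (x :: real) \<noteq> 0"
  using Gamma_real_pos[of x] by linarith

text \<open>Up to the constant \<open>ln (sqrt (2 * pi))\<close>, the error term of Stirling's formula for
  \<open>ln (Gamma (x + 1))\<close>.\<close>
definition stirling_err :: "real \<Rightarrow> real" where
  "stirling_err x = ln (Gamma (x + 1)) - (x + 1/2) * ln x + x"

lemma ln_Gamma_plus_one: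
  fixes x :: real
  assumes "x > 0"
  shows "ln (Gamma (x + 1)) = ln x + ln (Gamma x)"
proof -
  have "x \<notin> \<int>\<^sub>\<le>\<^sub>0" using assms by (auto elim!: nonpos_Ints_cases)
  then show ?thesis using assms by (simp add: Gamma_plus1 ln_mult_pos)
qed

lemma stirling_err_diff:
  assumes x: "x > 0"
  shows "stirling_err x - stirling_err (x + 1) = (x + 1/2) * (ln (x + 1) - ln x) - 1"
  using ln_Gamma_plus_one[of "x + 1"] x unfolding stirling_err_def by (simp add: algebra_simps)

lemma stirling_err_diff_antimono:
  assumes x: "0 < x" and xy: "x \<le> y"
  shows "stirling_err y - stirling_err (y + 1) \<le> stirling_err x - stirling_err (x + 1)"
proof -
  define D where "D t = (t + 1/2) * (ln (t + 1) - ln t) - 1" for t :: real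
  have "D y \<le> D x"
  proof (rule DERIV_nonpos_imp_nonincreasing[OF xy])
    fix t
    assume "x \<le> t"
    then have t: "t > 0" using x by simp
    have "(D has_real_derivative (ln (t + 1) - ln t) + (t + 1/2) * (1 / (t + 1) - 1 / t)) (at t)"
      unfolding D_def using t by (auto intro!: derivative_eq_intros)
    moreover have "(t + 1/2) * (1 / (t + 1) - 1 / t) = - ((2 * t + 1) / (2 * t * (t + 1)))"
      using t by (simp add: field_simps)
    ultimately show "\<exists>d. (D has_real_derivative d) (at t) \<and> d \<le> 0"
      using ln_add_one_diff_le[OF t] by auto
  qed
  then show ?thesis using x xy by (simp add: stirling_err_diff D_def)
qed

lemma fact_powr_div_Gamma_LIMSEQ:
  fixes x :: real
  assumes x: "x > 0"
  shows "(\<lambda>n. fact n * real n powr x / Gamma (x + real n + 1)) \<longlonglongrightarrow> 1"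
proof -
  have x': "x \<notin> \<int>\<^sub>\<le>\<^sub>0" using x by (auto elim!: nonpos_Ints_cases)
  have "(\<lambda>n. Gamma_series x n / Gamma x) \<longlonglongrightarrow> Gamma x / Gamma x"
    using x by (intro tendsto_intros) auto
  then have "(\<lambda>n. Gamma_series x n / Gamma x) \<longlonglongrightarrow> 1"
    using x by simp
  moreover have "eventually (\<lambda>n. Gamma_series x n / Gamma x
                    = fact n * real n powr x / Gamma (x + real n + 1)) sequentially"
    using eventually_gt_at_top[of 0]
  proof eventually_elim
    case (elim n)
    have "pochhammer x (n + 1) = Gamma (x + real n + 1) / Gamma x"
      using pochhammer_Gamma[OF x', of "n + 1"] by (simp add: add_ac)
    then show ?case
      using x elim by (simp add: Gamma_series_def powr_def)
  qed
  ultimately show ?thesis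
    by (rule Lim_transform_eventually)
qed

lemma stirling_err_shift_LIMSEQ:
  fixes x :: real
  assumes x: "x > 0"
  shows "(\<lambda>n. stirling_err (x + real n) - stirling_err (real n)) \<longlonglongrightarrow> 0"
proof -
  define G where "G n = fact n * real n powr x / Gamma (x + real n + 1)" for n
  have "(\<lambda>n. (x + real n + 1/2) * (ln (x + real n) - ln (real n))) \<longlonglongrightarrow> x"
    by real_asymp
  then have "(\<lambda>n. - ln (G n) - ((x + real n + 1/2) * (ln (x + real n) - ln (real n)) - x))
               \<longlonglongrightarrow> - ln 1 - (x - x)"
    unfolding G_def by (intro tendsto_intros fact_powr_div_Gamma_LIMSEQ x) simp
  then have "(\<lambda>n. - ln (G n) - ((x + real n + 1/2) * (ln (x + real n) - ln (real n)) - x))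
               \<longlonglongrightarrow> 0"
    by simp
  moreover have "eventually (\<lambda>n. - ln (G n) - ((x + real n + 1/2) * (ln (x + real n) - ln (real n)) - x)
                   = stirling_err (x + real n) - stirling_err (real n)) sequentially"
    using eventually_gt_at_top[of 0]
  proof eventually_elim
    case (elim n)
    have "ln (G n) = ln (fact n) + x * ln (real n) - ln (Gamma (x + real n + 1))"
      unfolding G_def using x elim by (simp add: ln_div ln_mult)
    then show ?case
      using Gamma_fact[of n] unfolding stirling_err_def by (simp add: algebra_simps)
  qed
  ultimately show ?thesis
    by (rule Lim_transform_eventually)
qed

lemma stirling_err_antimono:
  assumes x: "0 < x" and xy: "x \<le> y"
  shows "stirling_err y \<le> stirling_err x"
proof -
  have "(\<lambda>n. (stirling_err (y + real n) - stirling_err (real n))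
           - (stirling_err (x + real n) - stirling_err (real n))) \<longlonglongrightarrow> 0 - 0"
    using x xy by (intro tendsto_intros stirling_err_shift_LIMSEQ) auto
  moreover have "stirling_err y - stirling_err x
      \<le> (stirling_err (y + real n) - stirling_err (real n))
         - (stirling_err (x + real n) - stirling_err (real n))" for n
  proof -
    have telescope: "stirling_err z - stirling_err (z + real n)
        = (\<Sum>k<n. stirling_err (z + real k) - stirling_err (z + real k + 1))" for z
      using sum_lessThan_telescope'[of "\<lambda>k. stirling_err (z + real k)" n] by (simp add: add_ac)
    have "(\<Sum>k<n. stirling_err (y + real k) - stirling_err (y + real k + 1))
           \<le> (\<Sum>k<n. stirling_err (x + real k) - stirling_err (x + real k + 1))"
      using x xy by (intro sum_mono stirling_err_diff_antimono) auto
    then show ?thesis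
      unfolding telescope[symmetric] by simp
  qed
  ultimately have "stirling_err y - stirling_err x \<le> 0 - 0"
    by (intro LIMSEQ_le_const) auto
  then show ?thesis by simp
qed

section \<open>Density ratios, \<open>rho\<close> and total variation\<close>

lemma emeasure_density_le_cmult:
  assumes [measurable]: "q \<in> borel_measurable M" "p \<in> borel_measurable M" "A \<in> sets M"
    and le: "\<And>x. q x \<le> C * p x" and C: "C \<ge> 0" and p: "\<And>x. 0 \<le> p x"
  shows "emeasure (density M (\<lambda>x. ennreal (q x))) A
           \<le> ennreal C * emeasure (density M (\<lambda>x. ennreal (p x))) A"
proof -
  have "emeasure (density M (\<lambda>x. ennreal (q x))) A = (\<integral>\<^sup>+x. ennreal (q x) * indicator A x \<partial>M)"
    by (simp add: emeasure_density)
  also have "\<dots> \<le> (\<integral>\<^sup>+x. ennreal C * (ennreal (p x) * indicator A x) \<partial>M)"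
    using le C p
    by (intro nn_integral_mono) (auto simp: indicator_def ennreal_mult[symmetric] intro!: ennreal_leI)
  also have "\<dots> = ennreal C * emeasure (density M (\<lambda>x. ennreal (p x))) A"
    by (simp add: nn_integral_cmult emeasure_density)
  finally show ?thesis .
qed

lemma rho_density_le:
  assumes [measurable]: "q \<in> borel_measurable M" "p \<in> borel_measurable M"
    and le: "\<And>x. q x \<le> C * p x" and C: "C \<ge> 0" and p: "\<And>x. 0 \<le> p x"
  shows "rho (density M (\<lambda>x. ennreal (q x))) (density M (\<lambda>x. ennreal (p x))) \<le> ennreal C"
  unfolding rho_def
proof (rule SUP_least)
  fix A
  assume "A \<in> sets (density M (\<lambda>x. ennreal (p x)))"
  then have "A \<in> sets M" by simp
  then have QP: "emeasure (density M (\<lambda>x. ennreal (q x))) A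
                  \<le> emeasure (density M (\<lambda>x. ennreal (p x))) A * ennreal C"
    using emeasure_density_le_cmult[OF assms(1,2) _ le C p] by (simp add: mult.commute)
  show "ratio_conv (emeasure (density M (\<lambda>x. ennreal (q x))) A)
                   (emeasure (density M (\<lambda>x. ennreal (p x))) A) \<le> ennreal C"
  proof (cases "emeasure (density M (\<lambda>x. ennreal (p x))) A = 0")
    case True
    with QP show ?thesis by (simp add: ratio_conv_def)
  next
    case False
    with QP show ?thesis
      by (simp add: ratio_conv_def divide_le_posI_ennreal zero_less_iff_neq_zero)
  qed
qed

lemma rho_density_ge:
  assumes [measurable]: "q \<in> borel_measurable M" "p \<in> borel_measurable M" "A \<in> sets M"
    and ge: "\<And>x. x \<in> A \<Longrightarrow> K * p x \<le> q x" and K: "K \<ge> 0" and p: "\<And>x. x \<in> A \<Longrightarrow> 0 \<le> p x"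
    and P_A: "emeasure (density M (\<lambda>x. ennreal (p x))) A \<noteq> 0"
             "emeasure (density M (\<lambda>x. ennreal (p x))) A \<noteq> \<infinity>"
  shows "ennreal K \<le> rho (density M (\<lambda>x. ennreal (q x))) (density M (\<lambda>x. ennreal (p x)))"
proof -
  define QA where "QA = emeasure (density M (\<lambda>x. ennreal (q x))) A"
  define PA where "PA = emeasure (density M (\<lambda>x. ennreal (p x))) A"
  have "ennreal K * PA = (\<integral>\<^sup>+x. ennreal K * (ennreal (p x) * indicator A x) \<partial>M)"
    unfolding PA_def by (simp add: emeasure_density nn_integral_cmult)
  also have "\<dots> \<le> (\<integral>\<^sup>+x. ennreal (q x) * indicator A x \<partial>M)"
    using ge K p
    by (intro nn_integral_mono) (auto simp: indicator_def ennreal_mult[symmetric] intro!: ennreal_leI)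
  also have "\<dots> = QA"
    unfolding QA_def by (simp add: emeasure_density)
  finally have le: "ennreal K * PA \<le> QA" .
  have "ennreal K = ennreal K * PA / PA"
    using P_A unfolding PA_def by (simp add: ennreal_mult_divide_eq)
  also have "\<dots> \<le> QA / PA"
    by (rule divide_right_mono_ennreal[OF le])
  also have "\<dots> = ratio_conv QA PA"
    using P_A unfolding PA_def by (simp add: ratio_conv_def)
  also have "\<dots> \<le> rho (density M (\<lambda>x. ennreal (q x))) (density M (\<lambda>x. ennreal (p x)))"
    unfolding rho_def QA_def PA_def by (rule SUP_upper) simp
  finally show ?thesis .
qed

lemma emeasure_density_lborel_Ioo_neq_zero:
  fixes p :: "real \<Rightarrow> real"
  assumes [measurable]: "p \<in> borel_measurable borel"
    and "l < u" and pos: "\<And>x. x \<in> {l<..<u} \<Longrightarrow> 0 < p x"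
  shows "emeasure (density lborel (\<lambda>x. ennreal (p x))) {l<..<u} \<noteq> 0"
proof
  assume "emeasure (density lborel (\<lambda>x. ennreal (p x))) {l<..<u} = 0"
  then have "emeasure lborel {x \<in> space lborel. ennreal (p x) * indicator {l<..<u} x \<noteq> 0} = 0"
    by (simp add: emeasure_density nn_integral_0_iff)
  moreover have "{x \<in> space lborel. ennreal (p x) * indicator {l<..<u} x \<noteq> 0} = {l<..<u}"
    using pos by (force simp: indicator_def ennreal_eq_0_iff)
  ultimately show False
    using \<open>l < u\<close> by simp
qed

text \<open>Every level below \<open>r x0\<close> is exceeded by the ratio on a small interval of positive
  probability.\<close>
lemma ennreal_le_rho_density_lborel:
  fixes q p r :: "real \<Rightarrow> real"
  assumes [measurable]: "q \<in> borel_measurable borel" "p \<in> borel_measurable borel"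
    and fin: "finite_measure (density lborel (\<lambda>x. ennreal (p x)))"
    and U: "open U" "x0 \<in> U" and pos: "\<And>x. x \<in> U \<Longrightarrow> 0 < p x"
    and ratio: "\<And>x. x \<in> U \<Longrightarrow> r x * p x \<le> q x" and cont: "isCont r x0"
  shows "ennreal (r x0) \<le> rho (density lborel (\<lambda>x. ennreal (q x))) (density lborel (\<lambda>x. ennreal (p x)))"
proof (rule dense_le)
  fix y
  assume "y < ennreal (r x0)"
  then obtain K where y: "y = ennreal K" and K: "0 \<le> K" "K < r x0"
    by (cases y rule: ennreal_cases) (auto simp: ennreal_less_iff)
  obtain d where d: "d > 0" and rK: "\<And>x. x \<noteq> x0 \<Longrightarrow> dist x x0 < d \<Longrightarrow> K < r x"
    using order_tendstoD(1)[OF cont[unfolded isCont_def] K(2)] unfolding eventually_at by auto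
  obtain e where e: "e > 0" and "ball x0 e \<subseteq> U"
    using U openE by blast
  define A where "A = {x0<..<x0 + min d e}"
  have A: "x \<in> U \<and> K < r x" if "x \<in> A" for x
    using that rK \<open>ball x0 e \<subseteq> U\<close> by (auto simp: A_def dist_real_def)
  have "ennreal K \<le> rho (density lborel (\<lambda>x. ennreal (q x))) (density lborel (\<lambda>x. ennreal (p x)))"
  proof (rule rho_density_ge)
    show "A \<in> sets lborel" by (simp add: A_def)
    show "K * p x \<le> q x" if "x \<in> A" for x
    proof -
      have "K * p x \<le> r x * p x"
        using A[OF that] pos[of x] by (intro mult_right_mono) auto
      then show ?thesis
        using A[OF that] ratio[of x] by linarith
    qed
    show "emeasure (density lborel (\<lambda>x. ennreal (p x))) A \<noteq> 0"
      unfolding A_def using A pos d e by (intro emeasure_density_lborel_Ioo_neq_zero) (auto simp: A_def)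
    show "emeasure (density lborel (\<lambda>x. ennreal (p x))) A \<noteq> \<infinity>"
      using finite_measure.emeasure_finite[OF fin] by simp
  qed (use A pos K in \<open>auto intro: less_imp_le\<close>)
  then show "y \<le> rho (density lborel (\<lambda>x. ennreal (q x))) (density lborel (\<lambda>x. ennreal (p x)))"
    by (simp add: y)
qed

lemma d_TV_le_of_emeasure_le_cmult:
  assumes Q: "prob_space Q" and P: "prob_space P" and sets: "sets Q = sets P"
    and le: "\<And>A. A \<in> sets P \<Longrightarrow> emeasure Q A \<le> ennreal C * emeasure P A" and C: "C \<ge> 1"
  shows "d_TV Q P \<le> 1 - 1 / C"
  unfolding d_TV_def
proof (rule cSUP_least)
  interpret Q: prob_space Q by fact
  interpret P: prob_space P by fact
  have diff_le: "measure Q B - measure P B \<le> 1 - 1 / C" if B: "B \<in> sets P" for B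
  proof -
    have "ennreal (measure Q B) \<le> ennreal (C * measure P B)"
      using le[OF B] C by (simp add: Q.emeasure_eq_measure P.emeasure_eq_measure ennreal_mult)
    then have "measure Q B / C \<le> measure P B"
      using C by (simp add: ennreal_le_iff field_simps)
    moreover have "measure Q B * (1 - 1 / C) \<le> 1 - 1 / C"
      using C Q.prob_le_1[of B] by (intro mult_left_le_one_le) auto
    ultimately show ?thesis by (simp add: algebra_simps)
  qed
  fix A
  assume A: "A \<in> sets P"
  have "space Q = space P" using sets by (rule sets_eq_imp_space_eq)
  then have "measure P A - measure Q A = measure Q (space P - A) - measure P (space P - A)"
    using A sets Q.prob_compl[of A] P.prob_compl[of A] by simp
  then show "\<bar>measure Q A - measure P A\<bar> \<le> 1 - 1 / C"
    using diff_le[OF A] diff_le[of "space P - A"] A by auto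
qed (use sets.empty_sets in blast)

section \<open>Beta versus Gamma\<close>

lemma borel_measurable_beta_density [measurable]: "beta_density a b \<in> borel_measurable borel"
  unfolding beta_density_def[abs_def] by measurable

lemma borel_measurable_gamma_density [measurable]: "gamma_density a c \<in> borel_measurable borel"
  unfolding gamma_density_def[abs_def] by measurable

lemma gamma_density_nonneg: "a > 0 \<Longrightarrow> c > 0 \<Longrightarrow> 0 \<le> gamma_density a c x"
  unfolding gamma_density_def by simp

lemma gamma_density_pos: "a > 0 \<Longrightarrow> c > 0 \<Longrightarrow> x > 0 \<Longrightarrow> 0 < gamma_density a c x"
  unfolding gamma_density_def by simp

lemma nn_integral_gamma_density:
  fixes a c :: real
  assumes a: "a > 0" and c: "c > 0"
  shows "(\<integral>\<^sup>+x. ennreal (gamma_density a c x) \<partial>lborel) = 1"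
proof -
  define g where "g t = indicator {0..} t * t powr (a - 1) / exp t" for t :: real
  have [measurable]: "g \<in> borel_measurable borel"
    unfolding g_def[abs_def] by measurable
  have g_nonneg: "0 \<le> g t" for t
    unfolding g_def by (simp add: indicator_def)
  have "ennreal (Gamma a) = (\<integral>\<^sup>+t. ennreal (g t) \<partial>lborel)"
    unfolding g_def by (rule Gamma_conv_nn_integral_real[OF a])
  also have "\<dots> = ennreal \<bar>c\<bar> * (\<integral>\<^sup>+x. ennreal (g (0 + c * x)) \<partial>lborel)"
    by (rule nn_integral_real_affine) (use c in auto)
  finally have Gamma_eq: "ennreal (Gamma a) = ennreal c * (\<integral>\<^sup>+x. ennreal (g (c * x)) \<partial>lborel)"
    using c by simp
  have density_eq: "gamma_density a c x = c / Gamma a * g (c * x)" for x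
  proof (cases "x > 0")
    case True
    have "(c * x) powr (a - 1) = c powr (a - 1) * x powr (a - 1)"
      using True c by (simp add: powr_mult)
    moreover have "c powr a = c powr (a - 1) * c"
      using c by (simp add: powr_diff)
    ultimately show ?thesis
      using True c unfolding gamma_density_def g_def by (simp add: exp_minus field_simps)
  next
    case False
    then have "c * x \<le> 0"
      using c by (simp add: mult_le_0_iff)
    then show ?thesis
      using False unfolding gamma_density_def g_def by (cases "c * x = 0") (auto simp: indicator_def)
  qed
  have "(\<integral>\<^sup>+x. ennreal (gamma_density a c x) \<partial>lborel)
          = (\<integral>\<^sup>+x. ennreal (c / Gamma a) * ennreal (g (c * x)) \<partial>lborel)"
    unfolding density_eq using a c g_nonneg
    by (intro nn_integral_cong) (subst ennreal_mult[symmetric]; simp)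
  also have "\<dots> = ennreal (c / Gamma a) * (\<integral>\<^sup>+x. ennreal (g (c * x)) \<partial>lborel)"
    by (rule nn_integral_cmult) measurable
  also have "\<dots> = ennreal (1 / Gamma a) * ennreal (Gamma a)"
    unfolding Gamma_eq using a c by (simp add: ennreal_mult[symmetric] mult.assoc[symmetric])
  also have "\<dots> = 1"
    using a by (simp add: ennreal_mult[symmetric])
  finally show ?thesis .
qed

lemma nn_integral_beta_density:
  fixes a b :: real
  assumes a: "a > 0" and b: "b > 0"
  shows "(\<integral>\<^sup>+x. ennreal (beta_density a b x) \<partial>lborel) = 1"
proof -
  define h where "h t = t powr (a - 1) * (1 - t) powr (b - 1)" for t :: real
  define C where "C = Gamma (a + b) / (Gamma a * Gamma b)"
  have C: "C > 0"
    unfolding C_def using a b by simp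
  have h: "(\<integral>\<^sup>+x. ennreal (indicator {0..1} x * h x) \<partial>lborel) = ennreal (Beta a b)"
    unfolding h_def
    by (rule nn_integral_has_integral_lebesgue[OF _ has_integral_Beta_real[OF a b]]) auto
  have "beta_density a b x = C * (indicator {0..1} x * h x)" for x
    unfolding beta_density_def C_def h_def by (auto simp: indicator_def)
  moreover have "0 \<le> indicator {0..1} x * h x" for x
    unfolding h_def by (simp add: indicator_def)
  ultimately have "(\<integral>\<^sup>+x. ennreal (beta_density a b x) \<partial>lborel)
                     = (\<integral>\<^sup>+x. ennreal C * ennreal (indicator {0..1} x * h x) \<partial>lborel)"
    using C by (simp add: ennreal_mult)
  also have "\<dots> = ennreal C * ennreal (Beta a b)"
    unfolding h[symmetric] by (rule nn_integral_cmult) (unfold h_def, measurable)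
  also have "\<dots> = 1"
    using a b C by (simp add: ennreal_mult[symmetric] C_def Beta_altdef rGamma_inverse_Gamma field_simps)
  finally show ?thesis .
qed

lemma prob_space_beta_dist: "a > 0 \<Longrightarrow> b > 0 \<Longrightarrow> prob_space (beta_dist a b)"
  unfolding beta_dist_def by (rule prob_spaceI) (simp add: emeasure_density nn_integral_beta_density)

lemma prob_space_gamma_dist: "a > 0 \<Longrightarrow> c > 0 \<Longrightarrow> prob_space (gamma_dist a c)"
  unfolding gamma_dist_def by (rule prob_spaceI) (simp add: emeasure_density nn_integral_gamma_density)

definition beta_gamma_log_ratio :: "real \<Rightarrow> real \<Rightarrow> real \<Rightarrow> real \<Rightarrow> real" where
  "beta_gamma_log_ratio a b c x =
     ln (Gamma (a + b)) - ln (Gamma b) - a * ln c + (b - 1) * ln (1 - x) + c * x"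

lemma beta_density_eq_exp_log_ratio:
  assumes "a > 0" "b > 0" "c > 0" "0 < x" "x < 1"
  shows "beta_density a b x = exp (beta_gamma_log_ratio a b c x) * gamma_density a c x"
proof -
  have exp_eq: "exp (beta_gamma_log_ratio a b c x)
                  = Gamma (a + b) / Gamma b / c powr a * (1 - x) powr (b - 1) * exp (c * x)"
    using assms unfolding beta_gamma_log_ratio_def by (simp add: exp_add exp_diff powr_def)
  have "exp (c * x) * exp (- c * x) = 1"
    by (simp add: exp_minus field_simps)
  then show ?thesis
    using assms unfolding exp_eq beta_density_def gamma_density_def by (simp add: field_simps)
qed

lemma beta_gamma_log_ratio_le_mode:
  assumes b: "b > 1" and c: "c > 0" and x: "x < 1"
  shows "beta_gamma_log_ratio a b c x \<le> beta_gamma_log_ratio a b c (1 - (b - 1) / c)"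
proof -
  define u where "u = b - 1"
  define y where "y = c * (1 - x) / u"
  have u: "u > 0"
    using b by (simp add: u_def)
  have "y > 0"
    using u c x by (simp add: y_def)
  have ln_y: "ln y = ln c + ln (1 - x) - ln u"
    using u c x by (simp add: y_def ln_mult_pos ln_divide_pos)
  have "u * ln y \<le> u * (y - 1)"
    using ln_le_minus_one[OF \<open>y > 0\<close>] u by (intro mult_left_mono) auto
  moreover have "u * ln y = u * ln c + u * ln (1 - x) - u * ln u"
    unfolding ln_y by (simp add: algebra_simps)
  moreover have "u * ln (u / c) = u * ln u - u * ln c"
    using u c by (simp add: ln_divide_pos algebra_simps)
  moreover have "u * y = c - c * x" "c * (1 - u / c) = c - u"
    using u c by (simp_all add: y_def field_simps)
  ultimately show ?thesis
    unfolding beta_gamma_log_ratio_def u_def[symmetric] by (simp add: algebra_simps)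
qed

lemma beta_gamma_log_ratio_rate_le:
  assumes a: "a > 0" and x: "x > 0" and c: "c > 0"
  shows "beta_gamma_log_ratio a b (a / x) x \<le> beta_gamma_log_ratio a b c x"
proof -
  define y where "y = c * x / a"
  have "y > 0"
    using a c x by (simp add: y_def)
  then have "a * ln y \<le> a * (y - 1)"
    using ln_le_minus_one a by (intro mult_left_mono) auto
  moreover have "a * ln y = a * ln c + a * ln x - a * ln a"
    using a c x by (simp add: y_def ln_mult_pos ln_divide_pos algebra_simps)
  moreover have "a * ln (a / x) = a * ln a - a * ln x"
    using a x by (simp add: ln_divide_pos algebra_simps)
  moreover have "a * y = c * x"
    using a by (simp add: y_def)
  ultimately show ?thesis
    using x unfolding beta_gamma_log_ratio_def by (simp add: algebra_simps)
qed

lemma beta_gamma_log_ratio_mode_le: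
  assumes a: "a > 0" and b: "b > 1" and c: "c = a + b - 1 \<or> c = a + b"
  shows "beta_gamma_log_ratio a b c (1 - (b - 1) / c) \<le> - ln ((b - 1) / c) / 2"
proof -
  define u where "u = b - 1"
  have u: "0 < u" "u \<le> c"
    using a b c by (auto simp: u_def)
  have Gamma_ab: "ln (Gamma (a + b)) - (a + b - 1) * ln c + c = stirling_err c + ln c / 2"
    using c
  proof
    assume "c = a + b - 1"
    then have "a + b = c + 1" "a + b - 1 = c"
      by simp_all
    then show ?thesis
      unfolding stirling_err_def by (simp add: algebra_simps)
  next
    assume "c = a + b"
    then have "a + b = c" "a + b - 1 = c - 1"
      by simp_all
    then show ?thesis
      using ln_Gamma_plus_one[of c] u unfolding stirling_err_def by (simp add: algebra_simps)
  qed
  have Gamma_b: "ln (Gamma b) - u * ln u + u = stirling_err u + ln u / 2"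
    unfolding stirling_err_def u_def by (simp add: algebra_simps)
  have "stirling_err c \<le> stirling_err u"
    using u by (intro stirling_err_antimono) auto
  moreover have "beta_gamma_log_ratio a b c (1 - u / c)
      = ln (Gamma (a + b)) - ln (Gamma b) - a * ln c + u * ln (u / c) + c * (1 - u / c)"
    by (simp add: beta_gamma_log_ratio_def u_def)
  moreover have "u * ln (u / c) = u * ln u - u * ln c" "ln (u / c) = ln u - ln c"
    using u by (simp_all add: ln_divide_pos algebra_simps)
  moreover have "c * (1 - u / c) = c - u" "(a + b - 1) * ln c = a * ln c + u * ln c"
    using u by (simp_all add: u_def field_simps)
  ultimately show ?thesis
    using Gamma_ab Gamma_b unfolding u_def by linarith
qed

lemma beta_density_le_cmult_gamma_density:
  assumes a: "a > 0" and b: "b > 0" and c: "c > 0" and C: "C \<ge> 0"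
    and bound: "\<And>x. 0 < x \<Longrightarrow> x < 1 \<Longrightarrow> exp (beta_gamma_log_ratio a b c x) \<le> C"
  shows "beta_density a b x \<le> C * gamma_density a c x"
proof (cases "0 < x \<and> x < 1")
  case True
  then show ?thesis
    using beta_density_eq_exp_log_ratio[OF a b c] bound gamma_density_nonneg[OF a c]
    by (simp add: mult_right_mono)
next
  case False
  then show ?thesis
    using C gamma_density_nonneg[OF a c] unfolding beta_density_def by auto
qed

lemma rho_beta_gamma_le:
  assumes a: "a > 0" and b: "b > 0" and c: "c > 0" and C: "C \<ge> 0"
    and bound: "\<And>x. 0 < x \<Longrightarrow> x < 1 \<Longrightarrow> exp (beta_gamma_log_ratio a b c x) \<le> C"
  shows "rho (beta_dist a b) (gamma_dist a c) \<le> ennreal C"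
  unfolding beta_dist_def gamma_dist_def
  using beta_density_le_cmult_gamma_density[OF assms] C gamma_density_nonneg[OF a c]
  by (intro rho_density_le) auto

lemma d_TV_beta_gamma_le:
  assumes a: "a > 0" and b: "b > 0" and c: "c > 0" and C: "C \<ge> 1"
    and bound: "\<And>x. 0 < x \<Longrightarrow> x < 1 \<Longrightarrow> exp (beta_gamma_log_ratio a b c x) \<le> C"
  shows "d_TV (beta_dist a b) (gamma_dist a c) \<le> 1 - 1 / C"
proof (rule d_TV_le_of_emeasure_le_cmult)
  show "emeasure (beta_dist a b) A \<le> ennreal C * emeasure (gamma_dist a c) A"
    if "A \<in> sets (gamma_dist a c)" for A
    using that beta_density_le_cmult_gamma_density[OF a b c _ bound] C gamma_density_nonneg[OF a c]
    unfolding beta_dist_def gamma_dist_def by (intro emeasure_density_le_cmult) auto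
qed (use a b c C prob_space_beta_dist prob_space_gamma_dist in \<open>auto simp: beta_dist_def gamma_dist_def\<close>)

lemma exp_log_ratio_le_rho_beta_gamma:
  assumes a: "a > 0" and b: "b > 0" and c: "c > 0" and x: "0 < x" "x < 1"
  shows "ennreal (exp (beta_gamma_log_ratio a b c x)) \<le> rho (beta_dist a b) (gamma_dist a c)"
  unfolding beta_dist_def gamma_dist_def
proof (rule ennreal_le_rho_density_lborel[where U = "{0<..<1}"
    and r = "\<lambda>x. exp (beta_gamma_log_ratio a b c x)"])
  show "finite_measure (density lborel (\<lambda>x. ennreal (gamma_density a c x)))"
    using prob_space_gamma_dist[OF a c] unfolding gamma_dist_def prob_space_def by simp
  show "isCont (\<lambda>x. exp (beta_gamma_log_ratio a b c x)) x"
    unfolding beta_gamma_log_ratio_def using x by (intro continuous_intros) auto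
qed (use x gamma_density_pos[OF a c] beta_density_eq_exp_log_ratio[OF a b c] in auto)

lemma rho_and_d_TV_beta_gamma_le:
  assumes a: "a > 0" and b: "b > 1" and c: "c = a + b - 1 \<or> c = a + b"
  shows "rho (beta_dist a b) (gamma_dist a c) \<le> ennreal (((b - 1) / c) powr (-1/2))"
    and "d_TV (beta_dist a b) (gamma_dist a c) \<le> 1 - ((b - 1) / c) powr (1/2)"
proof -
  define t where "t = (b - 1) / c"
  have c0: "c > 0" and t: "0 < t" "t \<le> 1"
    using a b c by (auto simp: t_def)
  have bound: "exp (beta_gamma_log_ratio a b c x) \<le> t powr (-1/2)" if "0 < x" "x < 1" for x
  proof -
    have "beta_gamma_log_ratio a b c x \<le> - ln t / 2"
      using beta_gamma_log_ratio_le_mode[OF b c0 that(2), of a] beta_gamma_log_ratio_mode_le[OF a b c]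
      unfolding t_def by linarith
    then show ?thesis
      using t by (simp add: powr_def)
  qed
  have "t powr (1/2) \<le> 1"
    using t by (simp add: powr_le1)
  then have "1 \<le> t powr (-1/2)"
    using t by (simp add: powr_minus_divide)
  show "rho (beta_dist a b) (gamma_dist a c) \<le> ennreal (((b - 1) / c) powr (-1/2))"
    using rho_beta_gamma_le[OF a _ c0 _ bound] t b unfolding t_def by simp
  have "d_TV (beta_dist a b) (gamma_dist a c) \<le> 1 - 1 / t powr (-1/2)"
    using d_TV_beta_gamma_le[OF a _ c0 _ bound] \<open>1 \<le> t powr (-1/2)\<close> b by simp
  then show "d_TV (beta_dist a b) (gamma_dist a c) \<le> 1 - ((b - 1) / c) powr (1/2)"
    using t unfolding t_def[symmetric] by (simp add: powr_minus_divide)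
qed

lemma rho_beta_gamma_min_rate:
  assumes a: "a > 0" and b: "b > 1" and c: "c > 0"
  shows "rho (beta_dist a b) (gamma_dist a (a + b - 1)) \<le> rho (beta_dist a b) (gamma_dist a c)"
proof -
  define x0 where "x0 = a / (a + b - 1)"
  have x0: "0 < x0" "x0 < 1" "1 - (b - 1) / (a + b - 1) = x0" "a / x0 = a + b - 1"
    using a b by (auto simp: x0_def field_simps)
  have "rho (beta_dist a b) (gamma_dist a (a + b - 1))
          \<le> ennreal (exp (beta_gamma_log_ratio a b (a + b - 1) x0))"
    using a b beta_gamma_log_ratio_le_mode[of b "a + b - 1"] x0
    by (intro rho_beta_gamma_le) auto
  also have "\<dots> \<le> ennreal (exp (beta_gamma_log_ratio a b c x0))"
    using beta_gamma_log_ratio_rate_le[OF a x0(1) c] x0 by (simp add: ennreal_leI)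
  also have "\<dots> \<le> rho (beta_dist a b) (gamma_dist a c)"
    using a b c x0 by (intro exp_log_ratio_le_rho_beta_gamma) auto
  finally show ?thesis .
qed

lemma one_minus_sqrt_one_minus_lt:
  fixes d :: real
  assumes "0 < d" "d < 1"
  shows "1 - (1 - d) powr (1/2) < d / (2 - d)"
proof -
  define s where "s = sqrt (1 - d)"
  have s: "0 < s" "s < 1" "d = 1 - s\<^sup>2"
    using assms by (auto simp: s_def)
  then have "0 < s * (1 - s)\<^sup>2"
    by simp
  then have "(1 - s) * (1 + s\<^sup>2) < 1 - s\<^sup>2"
    by (simp add: power2_eq_square algebra_simps)
  then have "1 - s < (1 - s\<^sup>2) / (1 + s\<^sup>2)"
    by (simp add: pos_less_divide_eq add_pos_nonneg)
  moreover have "(1 - d) powr (1/2) = s"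
    using assms by (simp add: s_def powr_half_sqrt)
  moreover have "d / (2 - d) = (1 - s\<^sup>2) / (1 + s\<^sup>2)"
    using s(3) by simp
  ultimately show ?thesis
    by simp
qed

theorem theorem4:
  fixes a b :: real
  assumes ha: "a > 0" and hb: "b > 1"
  defines "\<delta> \<equiv> (a + 1) / (a + b)"
      and "\<delta>' \<equiv> a / (a + b - 1)"
  shows "rho (beta_dist a b) (gamma_dist a (a + b)) \<le> ennreal ((1 - \<delta>) powr (-1/2))
       \<and> d_TV (beta_dist a b) (gamma_dist a (a + b)) \<le> 1 - (1 - \<delta>) powr (1/2)
       \<and> 1 - (1 - \<delta>) powr (1/2) < \<delta> / (2 - \<delta>)
       \<and> (\<forall>c>0. rho (beta_dist a b) (gamma_dist a c)
                  \<ge> rho (beta_dist a b) (gamma_dist a (a + b - 1)))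
       \<and> \<delta>' < \<delta>
       \<and> rho (beta_dist a b) (gamma_dist a (a + b - 1)) \<le> ennreal ((1 - \<delta>') powr (-1/2))
       \<and> d_TV (beta_dist a b) (gamma_dist a (a + b - 1)) \<le> 1 - (1 - \<delta>') powr (1/2)
       \<and> 1 - (1 - \<delta>') powr (1/2) < \<delta>' / (2 - \<delta>')"
proof -
  have \<delta>: "1 - \<delta> = (b - 1) / (a + b)" "0 < \<delta>" "\<delta> < 1"
    using ha hb by (auto simp: \<delta>_def field_simps)
  have \<delta>': "1 - \<delta>' = (b - 1) / (a + b - 1)" "0 < \<delta>'" "\<delta>' < 1"
    using ha hb by (auto simp: \<delta>'_def field_simps)
  have "\<delta>' < \<delta>"
    using ha hb unfolding \<delta>_def \<delta>'_def by (simp add: divide_simps algebra_simps)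
  moreover note one_minus_sqrt_one_minus_lt[OF \<delta>(2,3)] one_minus_sqrt_one_minus_lt[OF \<delta>'(2,3)]
  ultimately show ?thesis
    using rho_and_d_TV_beta_gamma_le[OF ha hb, of "a + b"]
      rho_and_d_TV_beta_gamma_le[OF ha hb, of "a + b - 1"]
      rho_beta_gamma_min_rate[OF ha hb]
    unfolding \<delta>(1) \<delta>'(1) by simp
qed

end
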